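(* Let $n\ge 2$ and let $\Delta=\{(p_1,\ldots,p_n)\in\mathbb{R}^n : \sum_{i=1}^n p_i=1,\ p_i\ge 0\ \forall i\}$ be the probability simplex, with $\mathbf{e}_j$ ($j=1,\ldots,n$) the standard basis vectors (the point-mass PMFs). Let $\mathbf{p},\mathbf{p}'\in\Delta$. Then there exist $\mathbf{q}=(q_1,\ldots,q_n)\in\Delta$ and an index set $J\subset\{1,\ldots,n\}$ with $|J|=n-1$, $J=\{j_1,\ldots,j_{n-1}\}$, such that $$\mathbf{p}'=q_1\mathbf{p}+\sum_{i=1}^{n-1}q_{i+1}\mathbf{e}_{j_i}.$$ Moreover, if $\mathbf{p}'$ is an interior point of $\Delta$ (all entries strictly positive), then $q_1>0$. *)

theory Defs
  imports Main Complex_Main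
begin

text \<open>Points of R^n are represented as functions nat => real, indexed by 1..n
 (values outside 1..n are irrelevant).\<close>

definition prob_simplex :: "nat \<Rightarrow> (nat \<Rightarrow> real) set" where
  "prob_simplex n = {p. (\<forall>i\<in>{1..n}. p i \<ge> 0) \<and> (\<Sum>i=1..n. p i) = 1}"

definition std_basis :: "nat \<Rightarrow> nat \<Rightarrow> real" where
  "std_basis j = (\<lambda>k. if k = j then 1 else 0)"

end

theory Submission
  imports Defs
begin

text \<open>Take the largest \<open>t\<close> with \<open>t \<cdot> p \<le> p'\<close> coordinatewise, i.e. the minimum of
  \<open>p'\<^sub>k / p\<^sub>k\<close> over the support of \<open>p\<close>. The remainder \<open>p' - t \<cdot> p\<close> is nonnegative with total
  mass \<open>1 - t\<close> (so \<open>t \<le> 1\<close>) and vanishes at a coordinate \<open>m\<close> attaining the minimum, hence it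
  is a nonnegative combination of the \<open>n - 1\<close> point masses \<open>e\<^sub>k\<close>, \<open>k \<noteq> m\<close>. If \<open>p'\<close> is
  interior, then \<open>p'\<^sub>m = t \<cdot> p\<^sub>m > 0\<close> forces \<open>t > 0\<close>.\<close>

lemma obtain_max_scaling_below:
  fixes p p' :: "'a \<Rightarrow> real"
  assumes "finite A" and "\<forall>k\<in>A. 0 \<le> p k" and "\<forall>k\<in>A. 0 \<le> p' k"
    and "\<exists>k\<in>A. p k > 0"
  obtains m t where "m \<in> A" "p m > 0" "0 \<le> t" "p' m = t * p m" "\<forall>k\<in>A. t * p k \<le> p' k"
proof -
  define S where "S = {k\<in>A. p k > 0}"
  have "finite S" "S \<noteq> {}"
    using assms(1,4) by (auto simp: S_def)
  then obtain m where "m \<in> S" and m_min: "\<forall>k\<in>S. p' m / p m \<le> p' k / p k"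
    using Min_in[of "(\<lambda>k. p' k / p k) ` S"] Min_le[of "(\<lambda>k. p' k / p k) ` S"] by fastforce
  then have m: "m \<in> A" "p m > 0"
    by (auto simp: S_def)
  define t where "t = p' m / p m"
  have "\<forall>k\<in>A. t * p k \<le> p' k"
  proof
    fix k assume k: "k \<in> A"
    show "t * p k \<le> p' k"
    proof (cases "p k > 0")
      case True
      with k m_min show ?thesis
        by (auto simp: S_def t_def pos_le_divide_eq)
    next
      case False
      with k assms(2,3) show ?thesis
        by (metis mult_zero_right order_antisym_conv not_less)
    qed
  qed
  moreover have "0 \<le> t" "p' m = t * p m"
    using m assms(3) by (auto simp: t_def)
  ultimately show thesis
    using m that by blast
qed

definition skip :: "nat \<Rightarrow> nat \<Rightarrow> nat" where
  "skip m i = (if i < m then i else Suc i)"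

lemma bij_betw_skip:
  assumes "m \<in> {1..n}"
  shows "bij_betw (skip m) {1..n-1} ({1..n} - {m})"
proof (rule bij_betw_imageI)
  show "inj_on (skip m) {1..n-1}"
    by (auto simp: inj_on_def skip_def)
  have "x \<in> skip m ` {1..n-1}" if "x \<in> {1..n} - {m}" for x
  proof (cases "x < m")
    case True
    with that assms show ?thesis
      by (force simp: skip_def image_iff)
  next
    case False
    with that assms have "x = skip m (x - 1)" "x - 1 \<in> {1..n-1}"
      by (auto simp: skip_def)
    then show ?thesis
      by blast
  qed
  moreover have "skip m ` {1..n-1} \<subseteq> {1..n} - {m}"
    using assms by (auto simp: skip_def)
  ultimately show "skip m ` {1..n-1} = {1..n} - {m}"
    by blast
qed

lemma sum_skip:
  assumes "m \<in> {1..n}"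
  shows "(\<Sum>i=1..n-1. g (skip m i)) = (\<Sum>k\<in>{1..n} - {m}. g k)"
  using sum.reindex_bij_betw[OF bij_betw_skip[OF assms]] .

lemma sum_atLeastAtMost_head_tail:
  fixes q :: "nat \<Rightarrow> 'a::comm_monoid_add"
  assumes "1 \<le> n"
  shows "(\<Sum>i=1..n. q i) = q 1 + (\<Sum>i=1..n-1. q (Suc i))"
  using assms sum.atLeast_Suc_atMost[of 1 n q] sum.shift_bounds_cl_Suc_ivl[of q 1 "n-1"]
  by simp

lemma skip_mem:
  assumes "i \<in> {1..n-1}"
  shows "skip m i \<in> {1..n}"
  using assms by (auto simp: skip_def)

lemma sum_skip_std_basis:
  assumes "m \<in> {1..n}" and "k \<in> {1..n}" and "r m = 0"
  shows "(\<Sum>i=1..n-1. r (skip m i) * std_basis (skip m i) k) = r k"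
proof -
  have "(\<Sum>i=1..n-1. r (skip m i) * std_basis (skip m i) k) = (\<Sum>x\<in>{1..n} - {m}. r x * std_basis x k)"
    using sum_skip[OF assms(1)] .
  also have "\<dots> = (\<Sum>x\<in>{1..n} - {m}. if x = k then r x else 0)"
    by (intro sum.cong) (auto simp: std_basis_def)
  finally show ?thesis
    using assms by auto
qed

lemma prob_simplex_ex_pos:
  assumes "p \<in> prob_simplex n"
  shows "\<exists>k\<in>{1..n}. p k > 0"
proof (rule ccontr)
  assume "\<not> ?thesis"
  then have "(\<Sum>k=1..n. p k) \<le> 0"
    by (intro sum_nonpos) (auto simp: not_less)
  with assms show False
    by (simp add: prob_simplex_def)
qed

theorem lemma1:
  fixes n :: nat and p p' :: "nat \<Rightarrow> real"
  assumes "n \<ge> 2"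
    and "p \<in> prob_simplex n"
    and "p' \<in> prob_simplex n"
  shows "\<exists>q J j. q \<in> prob_simplex n \<and> J \<subseteq> {1..n} \<and> card J = n - 1
           \<and> bij_betw j {1..n-1} J
           \<and> (\<forall>k\<in>{1..n}. p' k = q 1 * p k + (\<Sum>i=1..n-1. q (i+1) * std_basis (j i) k))
           \<and> ((\<forall>k\<in>{1..n}. p' k > 0) \<longrightarrow> q 1 > 0)"
proof -
  have p: "\<forall>k\<in>{1..n}. 0 \<le> p k" "(\<Sum>k=1..n. p k) = 1"
    and p': "\<forall>k\<in>{1..n}. 0 \<le> p' k" "(\<Sum>k=1..n. p' k) = 1"
    using assms(2,3) by (auto simp: prob_simplex_def)
  obtain m t where m: "m \<in> {1..n}" "p m > 0" and "0 \<le> t"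
    and pm: "p' m = t * p m" and below: "\<forall>k\<in>{1..n}. t * p k \<le> p' k"
    by (rule obtain_max_scaling_below[OF finite_atLeastAtMost p(1) p'(1) prob_simplex_ex_pos[OF assms(2)]])
  define r where "r k = p' k - t * p k" for k
  define q where "q i = (if i = 1 then t else r (skip m (i - 1)))" for i
  have r_m: "r m = 0"
    using pm by (simp add: r_def)
  have q_tail: "(\<Sum>i=1..n-1. q (i+1) * g i) = (\<Sum>i=1..n-1. r (skip m i) * g i)" for g
    by (intro sum.cong) (auto simp: q_def)
  have "(\<Sum>k\<in>{1..n} - {m}. r k) = 1 - t"
    using p(2) p'(2) m(1) r_m by (simp add: sum_diff1 r_def sum_subtractf sum_distrib_left[symmetric] algebra_simps)
  then have "(\<Sum>i=1..n. q i) = 1"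
    using assms(1) q_tail[of "\<lambda>_. 1"] sum_skip[OF m(1), of r]
    by (subst sum_atLeastAtMost_head_tail) (auto simp: q_def)
  moreover have "0 \<le> q i" if "i \<in> {1..n}" for i
    using that \<open>0 \<le> t\<close>
    by (cases "i = 1") (auto simp: q_def r_def intro!: below[rule_format] skip_mem)
  moreover have "p' k = q 1 * p k + (\<Sum>i=1..n-1. q (i+1) * std_basis (skip m i) k)" if "k \<in> {1..n}" for k
    using sum_skip_std_basis[of m n k r, OF m(1) that r_m] q_tail by (simp add: q_def r_def)
  moreover have "p' m > 0 \<Longrightarrow> q 1 > 0"
    using m pm by (simp add: q_def zero_less_mult_iff)
  ultimately show ?thesis
    using m bij_betw_skip[OF m(1)]
    by (intro exI[of _ q] exI[of _ "{1..n} - {m}"] exI[of _ "skip m"]) (auto simp: prob_simplex_def)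
qed

end
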